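(* Let $\tau=\{\tau_1,\dots,\tau_n\}$ with $\tau_i=(T_i,C_i,D_i)$, $0<C_i\le D_i\le T_i$, and assume $\min_{1\le i\le n}(D_i-C_i)>0$. Let $\Pi>0$, and let $m'$ be a positive integer with $$m'\ge\frac{\sum_{i=1}^nC_i}{\min_{1\le i\le n}\{D_i-C_i\}}+n.$$ Then the MPR model $R=\langle\Pi,m'\Pi,m'\rangle$ satisfies $$\mathrm{dem}_k(A_k+D_k,m')\le\mathrm{sbf}_R(A_k+D_k)\quad\text{for all }k\in\{1,\dots,n\}\text{ and all real }A_k\ge0.$$
   Context: MPR model: $R=\langle\Pi,\Theta,m'\rangle$ with $\Pi>0$, $m'$ a positive integer and $0\le\Theta\le m'\Pi$. A supply pattern of $R$ is a piecewise-constant function $s:[0,\infty)\to\{0,\dots,m'\}$ with $\int_{j\Pi}^{(j+1)\Pi}s(t)\,dt=\Theta$ for every integer $j\ge0$. Then $$\mathrm{sbf}_R(t)=\inf\Big\{\int_{t_0}^{t_0+t}s: s\text{ a supply pattern of }R,\ t_0\ge0\Big\}.$$ Demand bound: for $t\ge0$ let $$CI_i(t)=\min\Big\{C_i,\max\Big\{0,\;t-\Big\lfloor\tfrac{t+T_i-D_i}{T_i}\Big\rfloor T_i\Big\}\Big\},\qquad W_i(t)=\Big\lfloor\tfrac{t+T_i-D_i}{T_i}\Big\rfloor C_i+CI_i(t).$$ Fix $k$ and $A\ge0$, and put $t=A+D_k$. For $i\ne k$ define $$\bar I_i=\min\{W_i(t),\,t-C_k\},\qquad \hat I_i=\min\{W_i(t)-CI_i(t),\,t-C_k\},$$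 and for $i=k$ define $$\bar I_k=\min\{W_k(t)-C_k,\,A\},\qquad \hat I_k=\min\{W_k(t)-C_k-CI_k(t),\,A\}.$$ Then $$\mathrm{dem}_k(A+D_k,m')=m'C_k+\sum_{i=1}^n\hat I_i+S,$$ where $S$ is the sum of the $m'-1$ largest values among $\{\bar I_i-\hat I_i\}_{i=1}^n$ (all of them if $n\le m'-1$; $S=0$ if $m'=1$). *)

theory Defs
  imports "HOL-Analysis.Analysis"
begin

definition piecewise_constant :: "(real \<Rightarrow> real) \<Rightarrow> bool" where
  "piecewise_constant s \<longleftrightarrow>
     (\<forall>b. \<exists>Bp. finite Bp \<and>
        (\<forall>x\<in>{0..b} - Bp. \<exists>e>0. \<forall>y. 0 \<le> y \<and> \<bar>y - x\<bar> < e \<longrightarrow> s y = s x))"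

definition supply_pattern :: "real \<Rightarrow> real \<Rightarrow> nat \<Rightarrow> (real \<Rightarrow> real) \<Rightarrow> bool" where
  "supply_pattern Per Theta m' s \<longleftrightarrow>
     piecewise_constant s \<and>
     (\<forall>t\<ge>0. s t \<in> real ` {0..m'}) \<and>
     (\<forall>j::nat. s integrable_on {real j * Per .. (real j + 1) * Per} \<and>
               integral {real j * Per .. (real j + 1) * Per} s = Theta)"

definition sbf :: "real \<Rightarrow> real \<Rightarrow> nat \<Rightarrow> real \<Rightarrow> real" where
  "sbf Per Theta m' t =
     Inf {integral {t0 .. t0 + t} s | s t0. supply_pattern Per Theta m' s \<and> t0 \<ge> 0}"

definition nfloor :: "real \<Rightarrow> real \<Rightarrow> real \<Rightarrow> real" where
  "nfloor Ti Di t = of_int \<lfloor>(t + Ti - Di) / Ti\<rfloor>"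

definition CI :: "real \<Rightarrow> real \<Rightarrow> real \<Rightarrow> real \<Rightarrow> real" where
  "CI Ti Ci Di t = min Ci (max 0 (t - nfloor Ti Di t * Ti))"

definition W :: "real \<Rightarrow> real \<Rightarrow> real \<Rightarrow> real \<Rightarrow> real" where
  "W Ti Ci Di t = nfloor Ti Di t * Ci + CI Ti Ci Di t"

definition sum_largest :: "nat \<Rightarrow> real list \<Rightarrow> real" where
  "sum_largest q xs = sum_list (take q (rev (sort xs)))"

text \<open>Tasks are indexed 1..n by the functions T, C, D. dem_k(t, m') with A = t - D_k.\<close>
definition Ibar :: "(nat \<Rightarrow> real) \<Rightarrow> (nat \<Rightarrow> real) \<Rightarrow> (nat \<Rightarrow> real) \<Rightarrow> nat \<Rightarrow> real \<Rightarrow> nat \<Rightarrow> real" where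
  "Ibar T C D k t i =
     (if i = k then min (W (T k) (C k) (D k) t - C k) (t - D k)
      else min (W (T i) (C i) (D i) t) (t - C k))"

definition Ihat :: "(nat \<Rightarrow> real) \<Rightarrow> (nat \<Rightarrow> real) \<Rightarrow> (nat \<Rightarrow> real) \<Rightarrow> nat \<Rightarrow> real \<Rightarrow> nat \<Rightarrow> real" where
  "Ihat T C D k t i =
     (if i = k then min (W (T k) (C k) (D k) t - C k - CI (T k) (C k) (D k) t) (t - D k)
      else min (W (T i) (C i) (D i) t - CI (T i) (C i) (D i) t) (t - C k))"

definition dem :: "nat \<Rightarrow> (nat \<Rightarrow> real) \<Rightarrow> (nat \<Rightarrow> real) \<Rightarrow> (nat \<Rightarrow> real) \<Rightarrow> nat \<Rightarrow> real \<Rightarrow> nat \<Rightarrow> real" where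
  "dem n T C D k t m' =
     real m' * C k + (\<Sum>i=1..n. Ihat T C D k t i)
     + sum_largest (m' - 1) (map (\<lambda>i. Ibar T C D k t i - Ihat T C D k t i) [1..<n+1])"

end

theory Submission
  imports Defs "HOL-Library.Multiset"
begin

text \<open>With full supply \<open>\<Theta> = m'\<Pi>\<close> every supply pattern delivers \<open>m'\<close> units on every
period, while it never exceeds \<open>m'\<close> pointwise; hence any window of length \<open>t\<close> receives at
least \<open>m' t\<close> (otherwise the rest of the enclosing periods would have to receive more than
\<open>m'\<close> per unit of time), i.e. \<open>sbf\<^sub>R(t) \<ge> m' t\<close>. On the demand side the \<open>m' - 1\<close> largest
differences sum to at most all of them, so \<open>dem\<^sub>k(t, m') \<le> m' C\<^sub>k + \<Sum>\<^sub>i \<bar>I\<^sub>i\<close>, and each \<open>\<bar>I\<^sub>i\<close>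
is at most \<open>t - C\<^sub>k\<close>. The hypothesis on \<open>m'\<close> gives \<open>m' \<ge> n\<close>, whence
\<open>dem\<^sub>k(t, m') \<le> m' C\<^sub>k + m' (t - C\<^sub>k) = m' t\<close>.\<close>

lemma sum_largest_le_sum_list:
  assumes "\<forall>x\<in>set xs. 0 \<le> x"
  shows "sum_largest q xs \<le> sum_list xs"
proof -
  let ?ys = "rev (sort xs)"
  have "sum_list ?ys = sum_list (take q ?ys) + sum_list (drop q ?ys)"
    by (metis append_take_drop_id sum_list_append)
  moreover have "0 \<le> sum_list (drop q ?ys)"
    using assms by (intro sum_list_nonneg) (auto dest: in_set_dropD)
  moreover have "sum_list ?ys = sum_list xs"
    by (metis mset_sort mset_rev sum_mset_sum_list)
  ultimately show ?thesis
    unfolding sum_largest_def by linarith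
qed

lemma supply_pattern_le:
  "supply_pattern Per Theta m' s \<Longrightarrow> 0 \<le> x \<Longrightarrow> s x \<le> real m'"
  unfolding supply_pattern_def by auto

lemma supply_pattern_integral_periods:
  assumes sp: "supply_pattern Per Theta m' s" and Per: "Per > 0"
  shows "s integrable_on {0 .. real N * Per} \<and> integral {0 .. real N * Per} s = real N * Theta"
proof (induction N)
  case 0
  then show ?case
    using integrable_on_refl[of s 0] by (simp add: cbox_interval)
next
  case (Suc N)
  have period: "s integrable_on {real N * Per .. (real N + 1) * Per}"
    "integral {real N * Per .. (real N + 1) * Per} s = Theta"
    using sp unfolding supply_pattern_def by auto
  have le1: "0 \<le> real N * Per" and le2: "real N * Per \<le> (real N + 1) * Per"
    using Per by simp_all
  have int: "s integrable_on {0 .. (real N + 1) * Per}"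
    using Henstock_Kurzweil_Integration.integrable_combine[OF le1 le2] Suc.IH period by blast
  moreover have "integral {0 .. (real N + 1) * Per} s = real N * Theta + Theta"
    using Henstock_Kurzweil_Integration.integral_combine[OF le1 le2 int] Suc.IH period by simp
  ultimately show ?case
    by (simp add: algebra_simps)
qed

lemma full_supply_window_integral_ge:
  assumes sp: "supply_pattern Per (real m' * Per) m' s" and Per: "Per > 0"
    and t0: "t0 \<ge> 0" and t: "t \<ge> 0"
  shows "real m' * t \<le> integral {t0 .. t0 + t} s"
proof -
  obtain N :: nat where "(t0 + t) / Per \<le> real N"
    using real_arch_simple by blast
  then have NP: "t0 + t \<le> real N * Per"
    using Per by (simp add: field_simps)
  let ?b = "real N * Per"
  have int: "s integrable_on {0 .. ?b}" and total: "integral {0 .. ?b} s = real N * (real m' * Per)"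
    using supply_pattern_integral_periods[OF sp Per] by auto
  have int_prefix: "s integrable_on {0 .. t0 + t}" and int_before: "s integrable_on {0 .. t0}"
    and int_after: "s integrable_on {t0 + t .. ?b}"
    using NP t t0 by (auto intro: integrable_subinterval_real[OF int])
  have split_total: "integral {0 .. t0 + t} s + integral {t0 + t .. ?b} s = integral {0 .. ?b} s"
    using Henstock_Kurzweil_Integration.integral_combine[OF _ NP int] t t0 by simp
  have split_prefix: "integral {0 .. t0} s + integral {t0 .. t0 + t} s = integral {0 .. t0 + t} s"
    using Henstock_Kurzweil_Integration.integral_combine[OF t0 _ int_prefix] t by simp
  have "integral {0 .. t0} s \<le> integral {0 .. t0} (\<lambda>_. real m')"
    by (rule integral_le[OF int_before]) (auto intro: supply_pattern_le[OF sp])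
  then have before: "integral {0 .. t0} s \<le> t0 * real m'"
    using t0 by simp
  have "integral {t0 + t .. ?b} s \<le> integral {t0 + t .. ?b} (\<lambda>_. real m')"
    by (rule integral_le[OF int_after]) (use t t0 in \<open>auto intro: supply_pattern_le[OF sp]\<close>)
  then have after: "integral {t0 + t .. ?b} s \<le> (?b - (t0 + t)) * real m'"
    using NP by simp
  show ?thesis
    using split_total split_prefix before after total by (simp add: algebra_simps)
qed

lemma sbf_full_supply_ge:
  assumes Per: "Per > 0" and t: "t \<ge> 0"
  shows "real m' * t \<le> sbf Per (real m' * Per) m' t"
  unfolding sbf_def
proof (rule cInf_greatest)
  have "supply_pattern Per (real m' * Per) m' (\<lambda>_. real m')"
    unfolding supply_pattern_def piecewise_constant_def
    using Per by (auto intro!: exI[of _ "{}"] simp: algebra_simps)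
  then show "{integral {t0..t0 + t} s |s t0. supply_pattern Per (real m' * Per) m' s \<and> 0 \<le> t0} \<noteq> {}"
    by blast
next
  fix x
  assume "x \<in> {integral {t0..t0 + t} s |s t0. supply_pattern Per (real m' * Per) m' s \<and> 0 \<le> t0}"
  then show "real m' * t \<le> x"
    using full_supply_window_integral_ge[OF _ Per _ t] by blast
qed

lemma Ihat_le_Ibar:
  assumes "0 \<le> C i"
  shows "Ihat T C D k t i \<le> Ibar T C D k t i"
proof -
  have "0 \<le> CI (T i) (C i) (D i) t"
    using assms unfolding CI_def by simp
  then show ?thesis
    unfolding Ibar_def Ihat_def by (cases "i = k") (auto simp: min_def)
qed

lemma Ibar_le:
  assumes "C k \<le> D k"
  shows "Ibar T C D k t i \<le> t - C k"
  using assms unfolding Ibar_def by auto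

lemma dem_le_sum_Ibar:
  assumes "\<forall>i\<in>{1..n}. 0 \<le> C i"
  shows "dem n T C D k t m' \<le> real m' * C k + (\<Sum>i=1..n. Ibar T C D k t i)"
proof -
  let ?d = "\<lambda>i. Ibar T C D k t i - Ihat T C D k t i"
  have "sum_largest (m' - 1) (map ?d [1..<n+1]) \<le> sum_list (map ?d [1..<n+1])"
    using assms Ihat_le_Ibar by (intro sum_largest_le_sum_list) fastforce
  also have "\<dots> = (\<Sum>i=1..n. ?d i)"
    by (simp only: sum_set_upt_conv_sum_list_nat[symmetric] set_upt)
      (simp add: atLeastLessThanSuc_atLeastAtMost)
  finally show ?thesis
    unfolding dem_def by (simp add: sum_subtractf)
qed

lemma dem_le_processors_times_window:
  assumes C_nonneg: "\<forall>i\<in>{1..n}. 0 \<le> C i" and "C k \<le> D k" and "C k \<le> t"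
    and "real n \<le> real m'"
  shows "dem n T C D k t m' \<le> real m' * t"
proof -
  have "dem n T C D k t m' \<le> real m' * C k + (\<Sum>i=1..n. Ibar T C D k t i)"
    using C_nonneg by (rule dem_le_sum_Ibar)
  also have "\<dots> \<le> real m' * C k + real n * (t - C k)"
    using sum_mono[of "{1..n}" "Ibar T C D k t" "\<lambda>_. t - C k"] Ibar_le[of C k D T t] assms(2) by simp
  also have "\<dots> \<le> real m' * C k + real m' * (t - C k)"
    using assms by (intro add_left_mono mult_right_mono) auto
  finally show ?thesis
    by (simp add: algebra_simps)
qed

theorem lemma3:
  fixes n :: nat and T C D :: "nat \<Rightarrow> real" and Per :: real and m' :: nat
  assumes tasks: "\<forall>i\<in>{1..n}. 0 < C i \<and> C i \<le> D i \<and> D i \<le> T i"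
    and n_pos: "n \<ge> 1"
    and slack: "Min ((\<lambda>i. D i - C i) ` {1..n}) > 0"
    and Pi_pos: "Per > 0"
    and m_pos: "m' > 0"
    and m_bound: "real m' \<ge> (\<Sum>i=1..n. C i) / Min ((\<lambda>i. D i - C i) ` {1..n}) + real n"
  shows "\<forall>k\<in>{1..n}. \<forall>A::real. A \<ge> 0 \<longrightarrow>
           dem n T C D k (A + D k) m' \<le> sbf Per (real m' * Per) m' (A + D k)"
proof (intro ballI allI impI)
  fix k A
  assume k: "k \<in> {1..n}" and A: "(A::real) \<ge> 0"
  have C_nonneg: "\<forall>i\<in>{1..n}. 0 \<le> C i"
    using tasks by (auto intro: less_imp_le)
  have Ck: "0 < C k" "C k \<le> D k"
    using tasks k by auto
  have "0 \<le> (\<Sum>i=1..n. C i) / Min ((\<lambda>i. D i - C i) ` {1..n})"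
    using C_nonneg slack by (intro divide_nonneg_pos sum_nonneg) auto
  then have "real n \<le> real m'"
    using m_bound by linarith
  then have "dem n T C D k (A + D k) m' \<le> real m' * (A + D k)"
    using C_nonneg Ck A by (intro dem_le_processors_times_window) auto
  also have "\<dots> \<le> sbf Per (real m' * Per) m' (A + D k)"
    using Pi_pos Ck A by (intro sbf_full_supply_ge) auto
  finally show "dem n T C D k (A + D k) m' \<le> sbf Per (real m' * Per) m' (A + D k)" .
qed

end
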